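(* The group $\Phi_L$, viewed as a subgroup of ${\rm PGL}_3(\mathbb{Q}_2)$, is torsion-free.
   Context: Let $\mathcal{O}$ be the ring of integers of $\mathbb{Q}(\sqrt{-7})$, $\Gamma_L$ the unitary group of the standard Hermitian lattice $\mathcal{O}[\tfrac12]^3$ (standard Hermitian form $\sum x_i\bar y_i$), and $P\Gamma_L$ its quotient by scalars; a fixed embedding $\mathcal{O}\to\mathbb{Z}_2$ identifies $P\Gamma_L$ with a lattice in ${\rm PGL}_3(\mathbb{Q}_2)$. With $\theta=\sqrt{-7}$, the Hermitian form induces a nondegenerate symmetric bilinear form on $\mathcal{O}[\tfrac12]^3/\theta\mathcal{O}[\tfrac12]^3\cong\mathbb{F}_7^3$, yielding a homomorphism $\Gamma_L\to{\rm O}_3(7)$ and hence $P\Gamma_L\to{\rm PO}_3(7)\cong{\rm PGL}_2(7)$. $\Phi_L$ is the kernel of this homomorphism $P\Gamma_L\to{\rm PGL}_2(7)$. *)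

theory Defs
  imports "HOL-Analysis.Analysis"
begin

text \<open>The ring O[1/2] for O the ring of integers of Q(sqrt(-7)), realised inside the
complex numbers.  Since 2 O is contained in Z[sqrt(-7)], which is contained in O,
we have O[1/2] = Z[1/2][sqrt(-7)].\<close>
definition O2 :: "complex set" where
  "O2 = {Complex (of_int a / 2 ^ k) (of_int b / 2 ^ k * sqrt 7) | a b (k::nat). True}"

definition theta :: complex where
  "theta = \<i> * complex_of_real (sqrt 7)"

definition cong_theta :: "complex \<Rightarrow> complex \<Rightarrow> bool" where
  "cong_theta z w \<longleftrightarrow> (\<exists>u\<in>O2. z - w = theta * u)"

definition cadj :: "complex^3^3 \<Rightarrow> complex^3^3" where
  "cadj g = (\<chi> i j. cnj (g $ j $ i))"

definition mpow :: "complex^3^3 \<Rightarrow> nat \<Rightarrow> complex^3^3" where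
  "mpow g n = (((**) g) ^^ n) (mat 1)"

definition is_scalar :: "complex^3^3 \<Rightarrow> bool" where
  "is_scalar g \<longleftrightarrow> (\<exists>c. g = mat c)"

text \<open>Unitary group of the standard Hermitian lattice O[1/2]^3 (form sum x_i conj y_i).\<close>
definition Gamma_L :: "(complex^3^3) set" where
  "Gamma_L = {g. (\<forall>i j. g $ i $ j \<in> O2) \<and> cadj g ** g = mat 1}"

text \<open>Preimage in Gamma_L of Phi_L: elements whose reduction mod theta lies in the
centre {I, -I} of O_3(7), i.e. maps to the identity of PO_3(7).\<close>
definition Phi_L :: "(complex^3^3) set" where
  "Phi_L = {g \<in> Gamma_L. \<exists>e\<in>{1, -1}. \<forall>i j. cong_theta (g $ i $ j) (mat e $ i $ j)}"

end

theory Submission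
  imports Defs
begin

(* Write g = a I + X with
   a the (1,1) entry; then X = 0 modulo theta, and X <> 0 unless g is scalar.  Comparing norms
   (7 is prime to 2) shows that theta^m divides a nonzero element of O[1/2] for only finitely
   many m, so some exact power theta^M, M >= 1, divides X.  In the binomial expansion of g^n
   the terms with X^k, k >= 2, are divisible by theta^(M+1), and even by theta^(M+3) when n = 7,
   because 7 divides the inner binomial coefficients of 7 and 7 = -theta^2.  If g^n is scalar,
   the linear term n a^(n-1) X is divisible by the same power; as a is a unit modulo theta, this
   forces theta^(M+1) to divide X, both when 7 does not divide n and when n = 7.  The general case
   follows by induction on n, since the congruence passes to g^7 and g^n = (g^7)^(n/7). *)

lemma theta_squared: "theta\<^sup>2 = -7"
proof -
  have "complex_of_real (sqrt 7) * complex_of_real (sqrt 7) = 7"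
    by (simp flip: of_real_mult)
  then show ?thesis
    unfolding theta_def power2_eq_square by (simp add: algebra_simps)
qed

lemma O2_iff: "z \<in> O2 \<longleftrightarrow> (\<exists>a b (k::nat). z = (of_int a + of_int b * theta) / 2 ^ k)"
proof -
  have "Complex (of_int a / 2 ^ k) (of_int b / 2 ^ k * sqrt 7) = (of_int a + of_int b * theta) / 2 ^ k"
    for a b :: int and k :: nat
    by (simp add: complex_eq_iff theta_def)
  then show ?thesis
    unfolding O2_def by simp
qed

lemma O2_add: "x \<in> O2 \<Longrightarrow> y \<in> O2 \<Longrightarrow> x + y \<in> O2"
proof -
  assume "x \<in> O2" "y \<in> O2"
  then obtain a b k c d l where x: "x = (of_int a + of_int b * theta) / 2 ^ k"
    and y: "y = (of_int c + of_int d * theta) / 2 ^ l"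
    by (auto simp: O2_iff)
  have "x + y = (of_int (a * 2 ^ l + c * 2 ^ k) + of_int (b * 2 ^ l + d * 2 ^ k) * theta) / 2 ^ (k + l)"
    unfolding x y power_add by (simp add: add_divide_distrib algebra_simps)
  then show ?thesis
    unfolding O2_iff by blast
qed

lemma O2_mult: "x \<in> O2 \<Longrightarrow> y \<in> O2 \<Longrightarrow> x * y \<in> O2"
proof -
  assume "x \<in> O2" "y \<in> O2"
  then obtain a b k c d l where x: "x = (of_int a + of_int b * theta) / 2 ^ k"
    and y: "y = (of_int c + of_int d * theta) / 2 ^ l"
    by (auto simp: O2_iff)
  have "(of_int a + of_int b * theta) * (of_int c + of_int d * theta)
      = of_int (a * c) + of_int (a * d + b * c) * theta + of_int (b * d) * theta\<^sup>2"
    by (simp add: algebra_simps power2_eq_square)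
  also have "\<dots> = of_int (a * c - 7 * b * d) + of_int (a * d + b * c) * theta"
    by (simp add: theta_squared)
  finally have "x * y = (of_int (a * c - 7 * b * d) + of_int (a * d + b * c) * theta) / 2 ^ (k + l)"
    unfolding x y power_add by simp
  then show ?thesis
    unfolding O2_iff by blast
qed

lemma O2_of_int: "of_int a \<in> O2"
  unfolding O2_iff by (rule exI[of _ a], rule exI[of _ 0], rule exI[of _ 0]) simp

lemma O2_theta: "theta \<in> O2"
  unfolding O2_iff by (rule exI[of _ 0], rule exI[of _ 1], rule exI[of _ 0]) simp

lemma O2_0: "0 \<in> O2"
  using O2_of_int[of 0] by simp

lemma O2_1: "1 \<in> O2"
  using O2_of_int[of 1] by simp

lemma O2_of_nat: "of_nat n \<in> O2"
  using O2_of_int[of "int n"] by simp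

lemma O2_uminus: "x \<in> O2 \<Longrightarrow> - x \<in> O2"
  using O2_mult[OF O2_of_int[of "-1"]] by simp

lemma O2_power: "x \<in> O2 \<Longrightarrow> x ^ n \<in> O2"
  by (induction n) (auto intro: O2_mult O2_1)

lemma O2_sign: "e \<in> {1, -1} \<Longrightarrow> e \<in> O2"
  using O2_1 O2_uminus by auto

lemma prime_seven: "prime (7::nat)"
  by (simp add: prime_nat_iff' atLeastLessThan_nat_numeral)

definition theta_dvd :: "nat \<Rightarrow> complex \<Rightarrow> bool" where
  "theta_dvd k z \<longleftrightarrow> (\<exists>u\<in>O2. z = theta ^ k * u)"

lemma theta_dvd_0_iff: "theta_dvd 0 z \<longleftrightarrow> z \<in> O2"
  unfolding theta_dvd_def by auto

lemma theta_dvd_imp_O2: "theta_dvd k z \<Longrightarrow> z \<in> O2"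
  unfolding theta_dvd_def by (auto intro: O2_mult O2_power O2_theta)

lemma theta_dvd_zero: "theta_dvd k 0"
  unfolding theta_dvd_def using O2_0 by force

lemma theta_dvd_add: "theta_dvd k x \<Longrightarrow> theta_dvd k y \<Longrightarrow> theta_dvd k (x + y)"
  unfolding theta_dvd_def by (auto simp flip: distrib_left intro: O2_add)

lemma theta_dvd_uminus: "theta_dvd k x \<Longrightarrow> theta_dvd k (- x)"
  unfolding theta_dvd_def by (auto intro!: bexI[of _ "- _"] O2_uminus)

lemma theta_dvd_diff: "theta_dvd k x \<Longrightarrow> theta_dvd k y \<Longrightarrow> theta_dvd k (x - y)"
  by (metis theta_dvd_add theta_dvd_uminus diff_conv_add_uminus)

lemma theta_dvd_sum: "(\<And>x. x \<in> A \<Longrightarrow> theta_dvd k (f x)) \<Longrightarrow> theta_dvd k (sum f A)"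
  by (induction A rule: infinite_finite_induct) (auto intro: theta_dvd_add theta_dvd_zero)

lemma theta_dvd_mult_left: "c \<in> O2 \<Longrightarrow> theta_dvd k x \<Longrightarrow> theta_dvd k (c * x)"
  unfolding theta_dvd_def by (auto intro!: bexI[of _ "c * _"] O2_mult)

lemma theta_dvd_mult: "theta_dvd k x \<Longrightarrow> theta_dvd l y \<Longrightarrow> theta_dvd (k + l) (x * y)"
  unfolding theta_dvd_def by (auto simp: power_add intro!: bexI[of _ "_ * _"] O2_mult)

lemma theta_dvd_mono: "theta_dvd k x \<Longrightarrow> l \<le> k \<Longrightarrow> theta_dvd l x"
proof -
  assume "theta_dvd k x" "l \<le> k"
  then obtain u where u: "u \<in> O2" "x = theta ^ k * u"
    unfolding theta_dvd_def by auto
  then have "x = theta ^ l * (theta ^ (k - l) * u)"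
    using \<open>l \<le> k\<close> by (simp flip: power_add)
  then show ?thesis
    unfolding theta_dvd_def using u(1) by (auto intro!: O2_mult O2_power O2_theta)
qed

lemma theta_dvd_theta_power_mult_iff: "theta_dvd (k + l) (theta ^ k * y) \<longleftrightarrow> theta_dvd l y"
proof
  assume "theta_dvd (k + l) (theta ^ k * y)"
  then obtain u where u: "u \<in> O2" "theta ^ k * y = theta ^ k * (theta ^ l * u)"
    unfolding theta_dvd_def by (auto simp: power_add)
  moreover have "theta \<noteq> 0"
    by (simp add: theta_def)
  ultimately show "theta_dvd l y"
    unfolding theta_dvd_def by auto
next
  assume "theta_dvd l y"
  then show "theta_dvd (k + l) (theta ^ k * y)"
    unfolding theta_dvd_def by (auto simp: power_add mult.assoc)
qed

lemma theta_dvd_seven_mult: "theta_dvd l w \<Longrightarrow> theta_dvd (l + 2) (7 * w)"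
proof -
  assume "theta_dvd l w"
  moreover have "theta_dvd 2 (- theta\<^sup>2)"
    using theta_dvd_theta_power_mult_iff[of 2 0 "-1"] O2_1 O2_uminus by (simp add: theta_dvd_0_iff)
  ultimately show ?thesis
    using theta_dvd_mult by (fastforce simp: theta_squared mult.commute)
qed

lemma theta_dvd_nat_mult_cancel:
  assumes "\<not> 7 dvd n" "y \<in> O2" "theta_dvd 1 (of_nat n * y)"
  shows "theta_dvd 1 y"
proof -
  have "coprime 7 n"
    using assms(1) by (intro prime_imp_coprime prime_seven)
  then have "gcd (int n) 7 = 1"
    by (metis coprime_commute coprime_iff_gcd_eq_1 gcd_int_int_eq of_nat_1 of_nat_numeral)
  then obtain s t :: int where "s * int n + t * 7 = 1"
    using bezout_int[of "int n" 7] by auto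
  then have "of_int s * of_nat n + of_int t * 7 = (1::complex)"
    by (metis of_int_1 of_int_add of_int_mult of_int_numeral of_int_of_nat_eq)
  then have "y = of_int s * (of_nat n * y) + of_int t * (7 * y)"
    by (metis distrib_right mult.assoc mult_1)
  moreover have "theta_dvd 1 (7 * y)"
    using theta_dvd_seven_mult[of 0 y] assms(2) by (simp add: theta_dvd_0_iff theta_dvd_mono)
  ultimately show ?thesis
    using assms(3) by (metis theta_dvd_add theta_dvd_mult_left O2_of_int)
qed

lemma theta_dvd_unit_mult_cancel:
  assumes "a \<in> O2" "e \<in> {1, -1}" "theta_dvd 1 (a - e)" "y \<in> O2" "theta_dvd 1 (a ^ m * y)"
  shows "theta_dvd 1 y"
proof -
  have power_cong: "theta_dvd 1 (a ^ j - e ^ j)" for j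
  proof (induction j)
    case 0
    then show ?case by (simp add: theta_dvd_zero)
  next
    case (Suc j)
    have "a ^ Suc j - e ^ Suc j = a * (a ^ j - e ^ j) + e ^ j * (a - e)"
      by (simp add: algebra_simps)
    then show ?case
      using Suc assms(1-3) by (metis theta_dvd_add theta_dvd_mult_left O2_power O2_sign)
  qed
  have "e ^ m * y = a ^ m * y - (a ^ m - e ^ m) * y"
    by (simp add: algebra_simps)
  then have "theta_dvd 1 (e ^ m * y)"
    using assms(4,5) power_cong by (metis theta_dvd_diff theta_dvd_mult_left mult.commute)
  moreover have "y = e ^ m * (e ^ m * y)"
    using assms(2) by (auto simp flip: mult.assoc power_mult_distrib)
  ultimately show ?thesis
    using assms(2) by (metis theta_dvd_mult_left O2_power O2_sign)
qed

lemma norm_O2_squared: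
  "(cmod ((of_int a + of_int b * theta) / 2 ^ k))\<^sup>2 * 4 ^ k = of_int (a\<^sup>2 + 7 * b\<^sup>2)"
proof -
  have "(of_int a + of_int b * theta) / 2 ^ k = Complex (of_int a / 2 ^ k) (of_int b / 2 ^ k * sqrt 7)"
    by (simp add: complex_eq_iff theta_def)
  moreover have "(4::real) ^ k = (2 ^ k)\<^sup>2"
    by (simp add: power2_eq_square flip: power_mult_distrib)
  ultimately show ?thesis
    by (simp add: cmod_power2 power_divide power_mult_distrib field_simps)
qed

lemma theta_dvd_imp_seven_power_dvd_norm:
  assumes "theta_dvd m ((of_int a + of_int b * theta) / 2 ^ k)"
  shows "7 ^ m dvd a\<^sup>2 + 7 * b\<^sup>2"
proof -
  define z where "z = (of_int a + of_int b * theta) / 2 ^ k"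
  obtain u where u: "u \<in> O2" "z = theta ^ m * u"
    using assms unfolding theta_dvd_def z_def by auto
  then obtain a' b' l where u_eq: "u = (of_int a' + of_int b' * theta) / 2 ^ l"
    unfolding O2_iff by auto
  have "(cmod z)\<^sup>2 = ((cmod theta) ^ m)\<^sup>2 * (cmod u)\<^sup>2"
    unfolding u(2) norm_mult norm_power power_mult_distrib ..
  also have "((cmod theta) ^ m)\<^sup>2 = ((cmod theta)\<^sup>2) ^ m"
    by (metis power_mult mult.commute)
  also have "(cmod theta)\<^sup>2 = 7"
    by (simp add: theta_def norm_mult)
  finally have "(cmod z)\<^sup>2 * 4 ^ k * 4 ^ l = 7 ^ m * ((cmod u)\<^sup>2 * 4 ^ l) * 4 ^ k"
    by simp
  then have "real_of_int (a\<^sup>2 + 7 * b\<^sup>2) * 4 ^ l = 7 ^ m * real_of_int (a'\<^sup>2 + 7 * b'\<^sup>2) * 4 ^ k"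
    unfolding z_def u_eq norm_O2_squared .
  then have "real_of_int ((a\<^sup>2 + 7 * b\<^sup>2) * 4 ^ l) = real_of_int (7 ^ m * (a'\<^sup>2 + 7 * b'\<^sup>2) * 4 ^ k)"
    by simp
  then have "(a\<^sup>2 + 7 * b\<^sup>2) * 4 ^ l = 7 ^ m * (a'\<^sup>2 + 7 * b'\<^sup>2) * 4 ^ k"
    by (simp only: of_int_eq_iff)
  then have "7 ^ m dvd (a\<^sup>2 + 7 * b\<^sup>2) * 4 ^ l"
    by (metis dvd_mult2 dvd_triv_left)
  moreover have "coprime (7::int) 4"
    using prime_imp_coprime[OF prime_seven, of 4] by (simp flip: coprime_int_iff)
  then have "coprime ((7::int) ^ m) (4 ^ l)"
    by (metis coprime_power_left_iff coprime_power_right_iff)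
  ultimately show ?thesis
    by (metis coprime_dvd_mult_left_iff)
qed

lemma theta_dvd_nonzero_bounded:
  assumes "z \<in> O2" "z \<noteq> 0"
  shows "\<exists>m. \<not> theta_dvd m z"
proof -
  obtain a b k where z: "z = (of_int a + of_int b * theta) / 2 ^ k"
    using assms(1) unfolding O2_iff by auto
  define N where "N = a\<^sup>2 + 7 * b\<^sup>2"
  have "(cmod z)\<^sup>2 * 4 ^ k = of_int N"
    unfolding z N_def by (rule norm_O2_squared)
  moreover have "(cmod z)\<^sup>2 * 4 ^ k \<noteq> 0"
    using assms(2) by simp
  ultimately have "N \<noteq> 0"
    by simp
  moreover have "N \<ge> 0"
    unfolding N_def by simp
  ultimately have "N > 0"
    by simp
  have "nat N < 7 ^ nat N"
    using less_exp[of "nat N"] power_mono[of "2::nat" 7 "nat N"] by linarith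
  then have "int (nat N) < int (7 ^ nat N)"
    by (simp only: of_nat_less_iff)
  then have "N < 7 ^ nat N"
    using \<open>N > 0\<close> by simp
  moreover have "7 ^ nat N \<le> N" if "theta_dvd (nat N) z"
    using theta_dvd_imp_seven_power_dvd_norm[OF that[unfolded z]] \<open>N > 0\<close>
    unfolding N_def by (simp add: zdvd_imp_le)
  ultimately show ?thesis
    by force
qed

lemma mpow_0: "mpow g 0 = mat 1"
  by (simp add: mpow_def)

lemma mpow_Suc: "mpow g (Suc n) = g ** mpow g n"
  by (simp add: mpow_def)

lemma mpow_add: "mpow g (m + n) = mpow g m ** mpow g n"
  by (induction m) (simp_all add: mpow_0 mpow_Suc matrix_mul_assoc)

lemma mpow_mult: "mpow g (m * n) = mpow (mpow g m) n"
  by (induction n) (simp_all add: mpow_0 mpow_Suc mpow_add)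

lemma mat_nth: "mat c $ i $ j = (if i = j then c else 0)"
  by (simp add: mat_def)

lemma matrix_mult_nth: "(A ** B) $ i $ j = (\<Sum>l\<in>UNIV. A $ i $ l * B $ l $ j)"
  by (simp add: matrix_matrix_mult_def)

lemma mat_plus_matrix_mult_nth:
  fixes X B :: "'a::comm_ring_1^'n^'n"
  shows "((mat a + X) ** B) $ i $ j = a * B $ i $ j + (X ** B) $ i $ j"
proof -
  have "(\<Sum>l\<in>UNIV. mat a $ i $ l * B $ l $ j) = a * B $ i $ j"
    by (simp add: mat_nth if_distrib if_distribR sum.delta cong: if_cong)
  then show ?thesis
    by (simp add: matrix_mult_nth distrib_right sum.distrib)
qed

lemma binomial_sum_Suc:
  fixes a :: "'a::comm_semiring_1"
  shows "a * (\<Sum>k\<le>n. of_nat (n choose k) * a ^ (n - k) * x k)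
      + (\<Sum>k\<le>n. of_nat (n choose k) * a ^ (n - k) * x (Suc k))
    = (\<Sum>k\<le>Suc n. of_nat (Suc n choose k) * a ^ (Suc n - k) * x k)"
proof -
  have "a * (\<Sum>k\<le>n. of_nat (n choose k) * a ^ (n - k) * x k)
      = (\<Sum>k\<le>n. of_nat (n choose k) * a ^ (Suc n - k) * x k)"
    unfolding sum_distrib_left by (rule sum.cong) (auto simp: Suc_diff_le mult_ac)
  also have "\<dots> = (\<Sum>k\<le>Suc n. of_nat (n choose k) * a ^ (Suc n - k) * x k)"
    by (simp add: binomial_eq_0)
  also have "\<dots> = a ^ Suc n * x 0 + (\<Sum>k\<le>n. of_nat (n choose Suc k) * a ^ (n - k) * x (Suc k))"
    by (subst sum.atMost_Suc_shift) simp
  finally have shifted: "a * (\<Sum>k\<le>n. of_nat (n choose k) * a ^ (n - k) * x k)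
      = a ^ Suc n * x 0 + (\<Sum>k\<le>n. of_nat (n choose Suc k) * a ^ (n - k) * x (Suc k))" .
  have "(\<Sum>k\<le>n. of_nat (Suc n choose Suc k) * a ^ (n - k) * x (Suc k))
      = (\<Sum>k\<le>n. of_nat (n choose Suc k) * a ^ (n - k) * x (Suc k))
        + (\<Sum>k\<le>n. of_nat (n choose k) * a ^ (n - k) * x (Suc k))"
    unfolding sum.distrib[symmetric] by (rule sum.cong) (auto simp: algebra_simps)
  then show ?thesis
    unfolding shifted by (subst sum.atMost_Suc_shift) (simp add: algebra_simps)
qed

lemma mpow_mat_plus_nth:
  fixes X :: "complex^3^3"
  shows "mpow (mat a + X) n $ i $ j
    = (\<Sum>k\<le>n. of_nat (n choose k) * a ^ (n - k) * mpow X k $ i $ j)"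
proof (induction n arbitrary: i j)
  case 0
  then show ?case
    by (simp add: mpow_0)
next
  case (Suc n)
  have "(X ** mpow (mat a + X) n) $ i $ j
      = (\<Sum>l\<in>UNIV. X $ i $ l * (\<Sum>k\<le>n. of_nat (n choose k) * a ^ (n - k) * mpow X k $ l $ j))"
    by (simp add: matrix_mult_nth Suc.IH)
  also have "\<dots> = (\<Sum>k\<le>n. of_nat (n choose k) * a ^ (n - k) * mpow X (Suc k) $ i $ j)"
    by (simp add: mpow_Suc matrix_mult_nth sum_distrib_left sum_distrib_right algebra_simps
        sum.swap[of _ UNIV])
  finally have X_times: "(X ** mpow (mat a + X) n) $ i $ j
      = (\<Sum>k\<le>n. of_nat (n choose k) * a ^ (n - k) * mpow X (Suc k) $ i $ j)" .
  show ?case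
    unfolding mpow_Suc[of "mat a + X"] mat_plus_matrix_mult_nth X_times Suc.IH
    by (rule binomial_sum_Suc)
qed

definition theta_dvd_mat :: "nat \<Rightarrow> complex^3^3 \<Rightarrow> bool" where
  "theta_dvd_mat k Y \<longleftrightarrow> (\<forall>i j. theta_dvd k (Y $ i $ j))"

lemma theta_dvd_mat_mult:
  "theta_dvd_mat k Y \<Longrightarrow> theta_dvd_mat l Z \<Longrightarrow> theta_dvd_mat (k + l) (Y ** Z)"
  unfolding theta_dvd_mat_def matrix_mult_nth by (auto intro!: theta_dvd_sum theta_dvd_mult)

lemma theta_dvd_mat_one: "theta_dvd_mat 0 (mat 1)"
  unfolding theta_dvd_mat_def theta_dvd_0_iff by (auto simp: mat_nth O2_0 O2_1)

lemma theta_dvd_mat_mpow: "theta_dvd_mat k Y \<Longrightarrow> theta_dvd_mat (n * k) (mpow Y n)"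
  by (induction n) (simp_all add: mpow_0 mpow_Suc theta_dvd_mat_one theta_dvd_mat_mult)

lemma theta_dvd_mpow_nth:
  "theta_dvd_mat k Y \<Longrightarrow> l \<le> n * k \<Longrightarrow> theta_dvd l (mpow Y n $ i $ j)"
  using theta_dvd_mat_mpow theta_dvd_mono unfolding theta_dvd_mat_def by blast

lemma exact_theta_power:
  assumes "theta_dvd_mat 1 X" "X \<noteq> 0"
  obtains M where "1 \<le> M" "theta_dvd_mat M X" "\<not> theta_dvd_mat (M + 1) X"
proof -
  obtain i j where "X $ i $ j \<noteq> 0"
    using assms(2) by (auto simp: vec_eq_iff)
  moreover have "X $ i $ j \<in> O2"
    using assms(1) theta_dvd_imp_O2 unfolding theta_dvd_mat_def by blast
  ultimately obtain m where m: "\<not> theta_dvd m (X $ i $ j)"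
    using theta_dvd_nonzero_bounded by blast
  have "k < m" if "theta_dvd_mat k X" for k
    using that m theta_dvd_mono unfolding theta_dvd_mat_def by (meson not_less)
  then obtain M where M: "theta_dvd_mat M X" "\<And>k. theta_dvd_mat k X \<Longrightarrow> k \<le> M"
    using ex_has_greatest_nat[of "\<lambda>k. theta_dvd_mat k X" 1 id m] assms(1) by auto
  show ?thesis
    using that[of M] M assms(1) by (meson add_le_same_cancel1 not_one_le_zero)
qed

definition cong_pm_one :: "complex^3^3 \<Rightarrow> bool" where
  "cong_pm_one g \<longleftrightarrow> (\<forall>i j. g $ i $ j \<in> O2) \<and> (\<exists>e\<in>{1, -1}. theta_dvd_mat 1 (g - mat e))"

lemma Phi_L_imp_cong_pm_one: "g \<in> Phi_L \<Longrightarrow> cong_pm_one g"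
  unfolding Phi_L_def Gamma_L_def cong_pm_one_def cong_theta_def theta_dvd_mat_def theta_dvd_def
  by auto

lemma theta_dvd_mat_mpow_mat_plus:
  assumes "a \<in> O2" "theta_dvd_mat 1 X"
  shows "theta_dvd_mat 1 (mpow (mat a + X) n - mat (a ^ n))"
  unfolding theta_dvd_mat_def
proof (intro allI)
  fix i j
  have "mpow (mat a + X) n $ i $ j - mat (a ^ n) $ i $ j
      = (\<Sum>k<n. of_nat (n choose Suc k) * a ^ (n - Suc k) * mpow X (Suc k) $ i $ j)"
    by (simp add: mpow_mat_plus_nth sum.atMost_shift mpow_0 mat_nth)
  also have "theta_dvd 1 \<dots>"
    using assms by (intro theta_dvd_sum theta_dvd_mult_left theta_dvd_mpow_nth O2_mult O2_of_nat O2_power) auto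
  finally show "theta_dvd 1 ((mpow (mat a + X) n - mat (a ^ n)) $ i $ j)"
    by simp
qed

lemma cong_pm_one_mpow: "cong_pm_one g \<Longrightarrow> cong_pm_one (mpow g n)"
proof -
  assume "cong_pm_one g"
  then obtain e where g_O2: "\<forall>i j. g $ i $ j \<in> O2"
    and e: "e \<in> {1, -1}" "theta_dvd_mat 1 (g - mat e)"
    unfolding cong_pm_one_def by blast
  have "theta_dvd_mat 1 (mpow g n - mat (e ^ n))"
    using theta_dvd_mat_mpow_mat_plus[OF O2_sign[OF e(1)] e(2), of n] by simp
  moreover have "e ^ n \<in> {1, -1}"
    using e(1) by (cases "even n") auto
  moreover have "\<forall>i j. mpow g n $ i $ j \<in> O2"
    using theta_dvd_mat_mpow[of 0 g n] g_O2 by (simp add: theta_dvd_mat_def theta_dvd_0_iff)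
  ultimately show ?thesis
    unfolding cong_pm_one_def by blast
qed

lemma theta_dvd_binomial_tail:
  assumes "theta_dvd_mat M X" "1 \<le> M" "2 \<le> k" "c \<in> O2"
  shows "theta_dvd (M + 1) (c * mpow X k $ i $ j)"
proof -
  have "M + 1 \<le> k * M"
    using mult_le_mono1[OF assms(3), of M] assms(2) by linarith
  then show ?thesis
    using assms(1,4) by (intro theta_dvd_mult_left theta_dvd_mpow_nth)
qed

lemma theta_dvd_binomial_tail_seven:
  assumes "theta_dvd_mat M X" "1 \<le> M" "k \<in> {2..7}" "c \<in> O2"
  shows "theta_dvd (M + 3) (of_nat (7 choose k) * c * mpow X k $ i $ j)"
proof (cases "k = 7")
  case True
  then have "M + 3 \<le> k * M"
    using assms(2) by simp
  then show ?thesis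
    using assms(1,4) by (intro theta_dvd_mult_left theta_dvd_mpow_nth O2_mult O2_of_nat)
next
  case False
  then have "7 dvd (7 choose k)"
    using assms(3) prime_seven by (intro dvd_choose_prime) auto
  then obtain q where q: "7 choose k = 7 * q" ..
  have "2 \<le> k"
    using assms(3) by simp
  then have "M + 1 \<le> k * M"
    using mult_le_mono1[of 2 k M] assms(2) by linarith
  then have "theta_dvd (M + 1 + 2) (7 * mpow X k $ i $ j)"
    using assms(1) by (intro theta_dvd_seven_mult theta_dvd_mpow_nth)
  then have "theta_dvd (M + 1 + 2) (of_nat q * c * (7 * mpow X k $ i $ j))"
    by (rule theta_dvd_mult_left[OF O2_mult[OF O2_of_nat assms(4)]])
  moreover have "M + 1 + 2 = M + 3"
    by simp
  ultimately have "theta_dvd (M + 3) (of_nat q * c * (7 * mpow X k $ i $ j))"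
    by metis
  then show ?thesis
    using q by (simp add: ac_simps)
qed

lemma linear_term_theta_dvd:
  fixes X :: "complex^3^3"
  assumes scalar: "mpow (mat a + X) n = mat c" and "X $ 1 $ 1 = 0" and "n > 0"
    and tail: "\<And>i j k. k \<in> {2..n} \<Longrightarrow> theta_dvd K (of_nat (n choose k) * a ^ (n - k) * mpow X k $ i $ j)"
  shows "theta_dvd K (of_nat n * a ^ (n - 1) * X $ i $ j)"
proof -
  define R where "R i j = (\<Sum>k\<in>{2..n}. of_nat (n choose k) * a ^ (n - k) * mpow X k $ i $ j)" for i j
  have "{..n} = insert 0 (insert 1 {2..n})"
    using \<open>n > 0\<close> by auto
  then have expand: "mpow (mat a + X) n $ i $ j
      = (if i = j then a ^ n else 0) + of_nat n * a ^ (n - 1) * X $ i $ j + R i j" for i j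
    unfolding mpow_mat_plus_nth R_def by (simp add: mat_nth mpow_0 mpow_Suc add.assoc)
  have R_dvd: "theta_dvd K (R i j)" for i j
    unfolding R_def by (intro theta_dvd_sum tail)
  show ?thesis
  proof (cases "i = j")
    case True
    then have "of_nat n * a ^ (n - 1) * X $ i $ j = R 1 1 - R i i"
      using expand[of i i, unfolded scalar] expand[of 1 1, unfolded scalar] assms(2)
      by (simp add: mat_nth algebra_simps)
    then show ?thesis
      using R_dvd theta_dvd_diff by metis
  next
    case False
    then have "of_nat n * a ^ (n - 1) * X $ i $ j = - R i j"
      using expand[of i j, unfolded scalar] by (simp add: mat_nth eq_neg_iff_add_eq_0 add.commute)
    then show ?thesis
      using R_dvd theta_dvd_uminus by metis
  qed
qed

lemma theta_dvd_mat_step_coprime_seven: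
  fixes X :: "complex^3^3"
  assumes scalar: "mpow (mat a + X) n = mat c" and X_11: "X $ 1 $ 1 = 0" and "n > 0" "\<not> 7 dvd n"
    and a: "a \<in> O2" "e \<in> {1, -1}" "theta_dvd 1 (a - e)"
    and X: "theta_dvd_mat M X" "1 \<le> M"
  shows "theta_dvd_mat (M + 1) X"
  unfolding theta_dvd_mat_def
proof (intro allI)
  fix i j
  obtain B where B: "B \<in> O2" "X $ i $ j = theta ^ M * B"
    using X(1) unfolding theta_dvd_mat_def theta_dvd_def by blast
  have "theta_dvd (M + 1) (of_nat (n choose k) * a ^ (n - k) * mpow X k $ i' $ j')"
    if "k \<in> {2..n}" for i' j' k
    using X a(1) that by (intro theta_dvd_binomial_tail O2_mult O2_of_nat O2_power) auto
  then have "theta_dvd (M + 1) (of_nat n * a ^ (n - 1) * X $ i $ j)"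
    using scalar X_11 \<open>n > 0\<close> by (intro linear_term_theta_dvd)
  moreover have "of_nat n * a ^ (n - 1) * X $ i $ j = theta ^ M * (of_nat n * (a ^ (n - 1) * B))"
    using B(2) by (simp add: algebra_simps)
  ultimately have "theta_dvd 1 (of_nat n * (a ^ (n - 1) * B))"
    using theta_dvd_theta_power_mult_iff by metis
  then have "theta_dvd 1 (a ^ (n - 1) * B)"
    using \<open>\<not> 7 dvd n\<close> theta_dvd_nat_mult_cancel O2_mult[OF O2_power[OF a(1)] B(1)] by blast
  then have "theta_dvd 1 B"
    by (rule theta_dvd_unit_mult_cancel[OF a B(1)])
  then show "theta_dvd (M + 1) (X $ i $ j)"
    unfolding B(2) by (rule theta_dvd_theta_power_mult_iff[THEN iffD2])
qed

lemma theta_dvd_mat_step_seven: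
  fixes X :: "complex^3^3"
  assumes scalar: "mpow (mat a + X) 7 = mat c" and X_11: "X $ 1 $ 1 = 0"
    and a: "a \<in> O2" "e \<in> {1, -1}" "theta_dvd 1 (a - e)"
    and X: "theta_dvd_mat M X" "1 \<le> M"
  shows "theta_dvd_mat (M + 1) X"
  unfolding theta_dvd_mat_def
proof (intro allI)
  fix i j
  obtain B where B: "B \<in> O2" "X $ i $ j = theta ^ M * B"
    using X(1) unfolding theta_dvd_mat_def theta_dvd_def by blast
  have "theta_dvd (M + 3) (of_nat (7 choose k) * a ^ (7 - k) * mpow X k $ i' $ j')"
    if "k \<in> {2..7}" for i' j' k
    using that X a(1) by (intro theta_dvd_binomial_tail_seven O2_power)
  then have "theta_dvd (M + 3) (of_nat 7 * a ^ (7 - 1) * X $ i $ j)"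
    using scalar X_11 by (intro linear_term_theta_dvd) auto
  moreover have "of_nat 7 * a ^ (7 - 1) * X $ i $ j = theta ^ M * (- theta\<^sup>2) * (a ^ 6 * B)"
    using B(2) by (simp add: theta_squared algebra_simps)
  moreover have "\<dots> = theta ^ (M + 2) * (- (a ^ 6 * B))"
    by (simp add: power_add power2_eq_square algebra_simps)
  moreover have "M + 3 = M + 2 + 1"
    by simp
  ultimately have "theta_dvd 1 (- (a ^ 6 * B))"
    using theta_dvd_theta_power_mult_iff[of "M + 2" 1] by metis
  then have "theta_dvd 1 (a ^ 6 * B)"
    using theta_dvd_uminus[of 1 "- (a ^ 6 * B)"] by simp
  then have "theta_dvd 1 B"
    by (rule theta_dvd_unit_mult_cancel[OF a B(1)])
  then show "theta_dvd (M + 1) (X $ i $ j)"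
    unfolding B(2) by (rule theta_dvd_theta_power_mult_iff[THEN iffD2])
qed

lemma cong_pm_one_scalar_root_base:
  assumes "cong_pm_one g" "n > 0" "\<not> 7 dvd n \<or> n = 7" "is_scalar (mpow g n)"
  shows "is_scalar g"
proof (rule ccontr)
  assume not_scalar: "\<not> is_scalar g"
  obtain e where e: "e \<in> {1, -1}" "theta_dvd_mat 1 (g - mat e)"
    using assms(1) unfolding cong_pm_one_def by blast
  define a where "a = g $ 1 $ 1"
  define X where "X = g - mat a"
  have g_eq: "g = mat a + X"
    by (simp add: X_def)
  have a_O2: "a \<in> O2"
    using assms(1) unfolding cong_pm_one_def a_def by blast
  have a_cong: "theta_dvd 1 (a - e)"
    using e(2)[unfolded theta_dvd_mat_def, rule_format, of 1 1] by (simp add: a_def mat_nth)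
  have "X $ i $ j = (g - mat e) $ i $ j - (if i = j then a - e else 0)" for i j
    by (simp add: X_def mat_nth)
  then have "theta_dvd_mat 1 X"
    using e(2) a_cong unfolding theta_dvd_mat_def by (simp add: theta_dvd_diff theta_dvd_zero)
  moreover have "X \<noteq> 0"
    using not_scalar g_eq unfolding is_scalar_def by auto
  ultimately obtain M where M: "1 \<le> M" "theta_dvd_mat M X" "\<not> theta_dvd_mat (M + 1) X"
    by (rule exact_theta_power)
  have X_11: "X $ 1 $ 1 = 0"
    by (simp add: X_def a_def mat_nth)
  obtain c where scalar: "mpow (mat a + X) n = mat c"
    using assms(4) g_eq unfolding is_scalar_def by auto
  have "theta_dvd_mat (M + 1) X"
    using assms(2,3) theta_dvd_mat_step_coprime_seven[OF scalar X_11 _ _ a_O2 e(1) a_cong M(2,1)]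
      theta_dvd_mat_step_seven[OF _ X_11 a_O2 e(1) a_cong M(2,1)] scalar
    by blast
  with M(3) show False
    by contradiction
qed

lemma cong_pm_one_scalar_root:
  "cong_pm_one g \<Longrightarrow> n > 0 \<Longrightarrow> is_scalar (mpow g n) \<Longrightarrow> is_scalar g"
proof (induction n arbitrary: g rule: less_induct)
  case (less n)
  show ?case
  proof (cases "7 dvd n")
    case False
    then show ?thesis
      using cong_pm_one_scalar_root_base[of g n] less.prems by blast
  next
    case True
    then obtain m where m: "n = 7 * m" ..
    then have "0 < m" "m < n"
      using less.prems(2) by auto
    moreover have "is_scalar (mpow (mpow g 7) m)"
      using less.prems(3) by (simp add: m mpow_mult)
    ultimately have "is_scalar (mpow g 7)"
      using less.IH cong_pm_one_mpow[OF less.prems(1)] by blast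
    then show ?thesis
      using cong_pm_one_scalar_root_base[of g 7] less.prems(1) by simp
  qed
qed

theorem lemma2p1:
  fixes g :: "complex^3^3" and n :: nat
  assumes "g \<in> Phi_L" and "n > 0" and "is_scalar (mpow g n)"
  shows "is_scalar g"
  using cong_pm_one_scalar_root[OF Phi_L_imp_cong_pm_one[OF assms(1)] assms(2,3)] .

end
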